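(* Let $f$ be a non-constant entire function which has only real zeros, has genus $0$ or $1$, and is real on the real axis. Then the points of ${\rm Fix}({\rm Aut}(f))$ are real, they are separated by the zeros of $f$, and the zeros of $f$ are separated by the points of ${\rm Fix}({\rm Aut}(f))$.
   Context: An automorphic function of $f$ is a (generally multivalued) analytic function $\phi$, or a branch of one, satisfying $f(\phi(z))=f(z)$, i.e. a branch of $f^{-1}\circ f$; ${\rm Aut}(f)$ is the group (under composition) of all of them, with identity ${\rm id}(z)=z$. ${\rm Fix}({\rm Aut}(f))=\bigcup_{\phi\in{\rm Aut}(f)-\{{\rm id}\}}\{w\in\mathbb{C}\,|\,\phi(w)=w\}$, the set of points fixed by some non-identity branch of $f^{-1}\circ f$. *)

theory Defs
  imports "HOL-Complex_Analysis.Complex_Analysis" "HOL-Computational_Algebra.Polynomial"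
begin

text \<open>The nonzero zeros of f, repeated according to multiplicity, are
a n for n in the index set I (finite or infinite).\<close>

definition canonical_factor :: "nat set \<Rightarrow> (nat \<Rightarrow> complex) \<Rightarrow> nat \<Rightarrow> nat \<Rightarrow> complex \<Rightarrow> complex" where
  "canonical_factor I a p n z = (if n \<in> I then weierstrass_factor p (z / a n) else 1)"

definition conv_exponent_sum :: "nat set \<Rightarrow> (nat \<Rightarrow> complex) \<Rightarrow> nat \<Rightarrow> bool" where
  "conv_exponent_sum I a p \<longleftrightarrow>
     summable (\<lambda>n. if n \<in> I then 1 / norm (a n) ^ (p + 1) else 0)"

definition has_genus :: "(complex \<Rightarrow> complex) \<Rightarrow> nat \<Rightarrow> bool" where
  "has_genus f g \<longleftrightarrow>
     (\<exists>(m::nat) (I::nat set) (a::nat \<Rightarrow> complex) (p::nat) (P::complex poly).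
        (\<forall>n\<in>I. a n \<noteq> 0) \<and>
        (\<exists>q. conv_exponent_sum I a q) \<and>
        p = (LEAST q. conv_exponent_sum I a q) \<and>
        (\<forall>z. f z = z ^ m * exp (poly P z) * (\<Prod>n. canonical_factor I a p n z)) \<and>
        g = max p (degree P))"

text \<open>Automorphic functions: a branch of f^{-1} o f, i.e. an analytic function phi on a
domain (open connected set) D with f (phi z) = f z on D.\<close>

definition aut_branch :: "(complex \<Rightarrow> complex) \<Rightarrow> (complex \<Rightarrow> complex) \<Rightarrow> complex set \<Rightarrow> bool" where
  "aut_branch f \<phi> D \<longleftrightarrow> open D \<and> connected D \<and> D \<noteq> {} \<and> \<phi> holomorphic_on D \<and>
     (\<forall>z\<in>D. f (\<phi> z) = f z)"

definition Fix_Aut :: "(complex \<Rightarrow> complex) \<Rightarrow> complex set" where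
  "Fix_Aut f = {w. \<exists>\<phi> D. aut_branch f \<phi> D \<and> \<not> (\<forall>z\<in>D. \<phi> z = z) \<and> w \<in> D \<and> \<phi> w = w}"

end

theory Submission
  imports Defs
begin

(* Away from critical points f is locally injective, so a branch of f^{-1} o f fixing such a
   point is the identity; at a critical point w one writes f - f w = k^n with n >= 2 and k
   conformal at w, and k^{-1}(e^{2 pi i/n} k) is a non-identity branch fixing w.  Thus
   Fix(Aut f) is the set of critical points.  Genus at most 1 yields the expansion
   f'/f = m/z + C + sum_k (1/(z - a_k) + [p = 1]/a_k); subtracting its value at a real point x
   removes the constants, and for real zeros
     Im (f'/f z - f'/f x) = - Im z (m/|z|^2 + sum_k 1/|z - a_k|^2),
   so critical points are real.  On a zero-free real interval f'/f is strictly decreasing,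
   then have vanishes at most once, and Rolle's theorem puts a critical point between two zeros. *)

lemma Fix_Aut_imp_deriv_eq_0:
  assumes hol: "f holomorphic_on UNIV" and wF: "w \<in> Fix_Aut f"
  shows "deriv f w = 0"
proof (rule ccontr)
  assume nz: "deriv f w \<noteq> 0"
  obtain \<phi> D where br: "aut_branch f \<phi> D" and nid: "\<not> (\<forall>z\<in>D. \<phi> z = z)"
    and wD: "w \<in> D" and fw: "\<phi> w = w"
    using wF unfolding Fix_Aut_def by blast
  have oD: "open D" and cD: "connected D" and hD: "\<phi> holomorphic_on D"
    and eq: "\<And>z. z \<in> D \<Longrightarrow> f (\<phi> z) = f z"
    using br unfolding aut_branch_def by auto
  obtain r where r: "r > 0" "inj_on f (ball w r)"
    using has_complex_derivative_locally_injective[OF hol _ _ nz] by auto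
  have "continuous (at w) \<phi>"
    using hD oD wD holomorphic_on_imp_continuous_on continuous_on_eq_continuous_at by blast
  then obtain d0 where d0: "d0 > 0" "\<And>z. dist z w < d0 \<Longrightarrow> dist (\<phi> z) (\<phi> w) < r"
    using r(1) unfolding continuous_at_eps_delta by metis
  obtain d1 where d1: "d1 > 0" "ball w d1 \<subseteq> D"
    using oD wD open_contains_ball by blast
  define d where "d = min d0 (min d1 r)"
  have near_w: "\<phi> z - z = 0" if "z \<in> ball w d" for z
  proof -
    have "\<phi> z \<in> ball w r" "z \<in> ball w r"
      using that d0(2) fw by (auto simp: d_def dist_commute)
    moreover have "f (\<phi> z) = f z" using eq d1 that by (auto simp: d_def)
    ultimately show ?thesis using r(2) by (auto dest: inj_onD)
  qed
  have "\<phi> z - z = 0" if "z \<in> D" for z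
    by (rule analytic_continuation[of "\<lambda>z. \<phi> z - z" D "ball w d" w])
       (use near_w hD oD cD d0 d1 r wD that in
         \<open>auto intro!: holomorphic_intros simp: d_def islimpt_ball\<close>)
  with nid show False by auto
qed

lemma nth_power_of_critical_zero:
  assumes hol: "F holomorphic_on S" and S: "open S" "connected S" "w \<in> S"
    and nc: "\<not> F constant_on S" and Fw: "F w = 0" and dFw: "deriv F w = 0"
  obtains n r k where "n \<ge> 2" "r > 0" "ball w r \<subseteq> S" "k holomorphic_on ball w r"
    "k w = 0" "deriv k w \<noteq> 0" "\<And>z. z \<in> ball w r \<Longrightarrow> F z = k z ^ n"
proof -
  obtain n r g where n0: "0 < n" and r0: "0 < r" and rS: "ball w r \<subseteq> S"
    and holg: "g holomorphic_on ball w r"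
    and Fg: "\<And>z. z \<in> ball w r \<Longrightarrow> F z = (z - w) ^ n * g z"
    and gnz: "\<And>z. z \<in> ball w r \<Longrightarrow> g z \<noteq> 0"
    using holomorphic_factor_zero_nonconstant[OF hol S Fw nc] by metis
  have n2: "n \<ge> 2"
  proof (rule ccontr)
    assume "\<not> n \<ge> 2"
    with n0 have n1: "n = 1" by auto
    have "(g has_field_derivative deriv g w) (at w)"
      using holg r0 by (auto intro!: holomorphic_derivI)
    then have "((\<lambda>z. (z - w) * g z) has_field_derivative g w) (at w)"
      by (auto intro!: derivative_eq_intros)
    then have "(F has_field_derivative g w) (at w)"
      by (rule has_field_derivative_transform_within_open[of _ _ _ "ball w r"])
         (use r0 Fg n1 in auto)
    then have "g w = 0" using dFw by (simp add: DERIV_imp_deriv)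
    with gnz r0 show False by auto
  qed
  obtain L where holL: "L holomorphic_on ball w r" and expL: "\<And>z. z \<in> ball w r \<Longrightarrow> exp (L z) = g z"
    using holomorphic_logarithm_exists[OF convex_ball open_ball holg gnz, of w] r0 by auto
  define k where "k = (\<lambda>z. (z - w) * exp (L z / of_nat n))"
  have "k holomorphic_on ball w r" unfolding k_def by (intro holomorphic_intros holL) auto
  moreover have "F z = k z ^ n" if "z \<in> ball w r" for z
  proof -
    have "exp (L z / of_nat n) ^ n = exp (L z)"
      using n0 by (simp add: exp_of_nat_mult[symmetric])
    then show ?thesis using that Fg expL by (simp add: k_def power_mult_distrib)
  qed
  moreover have "(L has_field_derivative deriv L w) (at w)"
    using holL r0 by (auto intro!: holomorphic_derivI)
  then have "(k has_field_derivative exp (L w / of_nat n)) (at w)"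
    unfolding k_def using n0 by (auto intro!: derivative_eq_intros)
  then have "deriv k w \<noteq> 0" by (simp add: DERIV_imp_deriv)
  ultimately show thesis using that n2 r0 rS by (simp add: k_def)
qed

lemma holomorphic_local_inverse:
  assumes hol: "k holomorphic_on ball w r" and r: "r > 0" and dk: "deriv k w \<noteq> 0"
  obtains \<rho> h where "0 < \<rho>" "ball w \<rho> \<subseteq> ball w r" "open (k ` ball w \<rho>)"
    "h holomorphic_on k ` ball w \<rho>"
    "\<And>z. z \<in> ball w \<rho> \<Longrightarrow> h (k z) = z"
proof -
  obtain \<rho> where \<rho>: "\<rho> > 0" "ball w \<rho> \<subseteq> ball w r" "inj_on k (ball w \<rho>)"
    using has_complex_derivative_locally_injective[OF hol _ open_ball dk] r by auto
  have holB: "k holomorphic_on ball w \<rho>" using hol \<rho>(2) by (rule holomorphic_on_subset)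
  obtain h where "h holomorphic_on k ` ball w \<rho>" "\<And>z. z \<in> ball w \<rho> \<Longrightarrow> h (k z) = z"
    using holomorphic_has_inverse[OF holB open_ball \<rho>(3)] by metis
  moreover have "open (k ` ball w \<rho>)"
    using open_mapping_thm3[OF holB open_ball \<rho>(3)] .
  ultimately show thesis using that \<rho>(1,2) by blast
qed

lemma local_rotation_branch:
  assumes hol: "k holomorphic_on ball w r" and r: "r > 0" and kw: "k w = 0"
    and dk: "deriv k w \<noteq> 0" and n\<omega>: "norm \<omega> = 1" and \<omega>1: "\<omega> \<noteq> 1"
  obtains D \<phi> where "open D" "connected D" "w \<in> D" "D \<subseteq> ball w r" "\<phi> holomorphic_on D"
    "\<And>z. z \<in> D \<Longrightarrow> \<phi> z \<in> ball w r \<and> k (\<phi> z) = \<omega> * k z"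
    "\<phi> w = w" "\<not> (\<forall>z\<in>D. \<phi> z = z)"
proof -
  obtain \<rho> h where \<rho>: "0 < \<rho>" "ball w \<rho> \<subseteq> ball w r" and oV: "open (k ` ball w \<rho>)"
    and holh: "h holomorphic_on k ` ball w \<rho>" and hk: "\<And>z. z \<in> ball w \<rho> \<Longrightarrow> h (k z) = z"
    using holomorphic_local_inverse[OF hol r dk] by metis
  define B where "B = ball w \<rho>"
  have holkB: "k holomorphic_on B" using hol \<rho>(2) unfolding B_def by (rule holomorphic_on_subset)
  have "0 \<in> k ` B" using kw \<rho>(1) unfolding B_def by (metis centre_in_ball imageI)
  then obtain \<epsilon> where \<epsilon>: "\<epsilon> > 0" "ball 0 \<epsilon> \<subseteq> k ` B"
    using oV open_contains_ball unfolding B_def by blast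
  have "continuous (at w) k"
    using hol r holomorphic_on_imp_continuous_on continuous_on_eq_continuous_at
      open_ball centre_in_ball by blast
  then obtain \<delta> where \<delta>: "\<delta> > 0" "\<And>z. dist z w < \<delta> \<Longrightarrow> dist (k z) (k w) < \<epsilon>"
    using \<epsilon>(1) unfolding continuous_at_eps_delta by metis
  define D where "D = ball w (min \<delta> \<rho>)"
  have DB: "D \<subseteq> B" unfolding D_def B_def by auto
  have rotate_in_image: "\<omega> * k z \<in> k ` B" if "z \<in> D" for z
  proof -
    have "norm (k z) < \<epsilon>" using that \<delta>(2) kw by (auto simp: D_def dist_commute)
    then show ?thesis using \<epsilon>(2) by (auto simp: norm_mult n\<omega>)
  qed
  define \<phi> where "\<phi> = (\<lambda>z. h (\<omega> * k z))"
  have "(\<lambda>z. \<omega> * k z) holomorphic_on D"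
    using holkB DB by (intro holomorphic_intros) (auto intro: holomorphic_on_subset)
  then have "h \<circ> (\<lambda>z. \<omega> * k z) holomorphic_on D"
    by (rule holomorphic_on_compose_gen[OF _ holh[folded B_def]]) (use rotate_in_image in auto)
  then have hol\<phi>: "\<phi> holomorphic_on D" by (simp add: \<phi>_def o_def)
  have \<phi>_rotates: "\<phi> z \<in> B \<and> k (\<phi> z) = \<omega> * k z" if "z \<in> D" for z
    using rotate_in_image[OF that] hk unfolding \<phi>_def B_def by auto
  have \<phi>w: "\<phi> w = w" using hk[of w] \<rho>(1) by (simp add: \<phi>_def kw)
  have "\<not> (\<forall>z\<in>D. \<phi> z = z)"
  proof
    assume fixes_all: "\<forall>z\<in>D. \<phi> z = z"
    define z where "z = w + of_real (min \<delta> \<rho> / 2)"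
    have zD: "z \<in> D" using \<delta>(1) \<rho>(1) by (simp add: z_def D_def dist_norm min_def)
    have "k z = \<omega> * k z" using \<phi>_rotates[OF zD] fixes_all zD by auto
    then have "k z = k w" using \<omega>1 kw by (metis mult_cancel_right1)
    then have "z = w" using hk zD DB kw unfolding B_def by (metis in_mono centre_in_ball \<rho>(1))
    then show False using \<delta>(1) \<rho>(1) by (simp add: z_def)
  qed
  moreover have "open D" "connected D" "w \<in> D" using \<delta>(1) \<rho>(1) by (auto simp: D_def)
  ultimately show thesis
    using that hol\<phi> \<phi>_rotates \<phi>w \<rho>(2) DB unfolding B_def by blast
qed

lemma exp_2pi_i_div_ne_1:
  assumes "n \<ge> (2::nat)"
  shows "exp (2 * of_real pi * \<i> / of_nat n) \<noteq> 1"
proof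
  assume "exp (2 * of_real pi * \<i> / of_nat n) = 1"
  then obtain j :: int where j: "Im (2 * of_real pi * \<i> / of_nat n) = of_int (2 * j) * pi"
    unfolding exp_eq_1 by blast
  have "Im (2 * of_real pi * \<i> / of_nat n) = 2 * pi / n"
    by (simp add: Im_divide_of_nat)
  with j have "pi * (2 / real n) = pi * (2 * of_int j)" by (simp add: mult_ac)
  then have "2 / real n = 2 * of_int j"
    by (metis mult_cancel_left pi_neq_zero times_divide_eq_right)
  then have "1 / real n = of_int j" by simp
  moreover have "0 < 1 / real n" "1 / real n < 1" using assms by auto
  ultimately have "0 < j \<and> j < 1" by (metis of_int_0_less_iff of_int_less_1_iff)
  then show False by linarith
qed

lemma deriv_eq_0_imp_Fix_Aut:
  assumes hol: "f holomorphic_on UNIV" and nc: "\<not> (\<exists>c. \<forall>z. f z = c)" and df: "deriv f w = 0"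
  shows "w \<in> Fix_Aut f"
proof -
  define F where "F = (\<lambda>z. f z - f w)"
  have holF: "F holomorphic_on UNIV" unfolding F_def by (intro holomorphic_intros hol)
  have ncF: "\<not> F constant_on UNIV"
  proof
    assume "F constant_on UNIV"
    then obtain c where "\<forall>z. f z - f w = c" unfolding constant_on_def F_def by auto
    then have "\<forall>z. f z = c + f w" by (metis diff_eq_eq)
    with nc show False by blast
  qed
  have dF: "deriv F w = 0"
    using hol df unfolding F_def by (simp add: deriv_diff holomorphic_on_imp_differentiable_at)
  obtain n r k where n: "n \<ge> 2" and r: "r > 0" and holk: "k holomorphic_on ball w r"
    and kw: "k w = 0" and dk: "deriv k w \<noteq> 0" and Fk: "\<And>z. z \<in> ball w r \<Longrightarrow> F z = k z ^ n"
    using nth_power_of_critical_zero[OF holF open_UNIV connected_UNIV UNIV_I ncF _ dF]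
    by (auto simp: F_def)
  define \<omega> where "\<omega> = exp (2 * of_real pi * \<i> / of_nat n)"
  have \<omega>n: "\<omega> ^ n = 1" using n by (simp add: \<omega>_def exp_of_nat_mult[symmetric])
  have n\<omega>: "norm \<omega> = 1" by (simp add: \<omega>_def norm_exp_eq_Re)
  obtain D \<phi> where D: "open D" "connected D" "w \<in> D" "D \<subseteq> ball w r"
    and hol\<phi>: "\<phi> holomorphic_on D"
    and \<phi>: "\<And>z. z \<in> D \<Longrightarrow> \<phi> z \<in> ball w r \<and> k (\<phi> z) = \<omega> * k z"
    and \<phi>w: "\<phi> w = w" and nid: "\<not> (\<forall>z\<in>D. \<phi> z = z)"
    by (rule local_rotation_branch[OF holk r kw dk n\<omega> exp_2pi_i_div_ne_1[OF n, folded \<omega>_def]])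
      blast
  have "f (\<phi> z) = f z" if "z \<in> D" for z
  proof -
    have "F (\<phi> z) = \<omega> ^ n * k z ^ n" using Fk \<phi>[OF that] by (simp add: power_mult_distrib)
    also have "\<dots> = F z" using Fk D(4) that \<omega>n by auto
    finally show ?thesis by (simp add: F_def)
  qed
  then have "aut_branch f \<phi> D" using D hol\<phi> by (auto simp: aut_branch_def)
  then show ?thesis unfolding Fix_Aut_def using D(3) \<phi>w nid by blast
qed

lemma Fix_Aut_eq_critical_points:
  assumes "f holomorphic_on UNIV" "\<not> (\<exists>c. \<forall>z. f z = c)"
  shows "Fix_Aut f = {w. deriv f w = 0}"
  using Fix_Aut_imp_deriv_eq_0[OF assms(1)] deriv_eq_0_imp_Fix_Aut[OF assms] by blast

definition logderiv_term :: "nat set \<Rightarrow> (nat \<Rightarrow> complex) \<Rightarrow> nat \<Rightarrow> nat \<Rightarrow> complex \<Rightarrow> complex" where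
  "logderiv_term I a p k z = (if k \<in> I then 1 / (z - a k) + (if p = 1 then 1 / a k else 0) else 0)"

locale canonical_product =
  fixes I :: "nat set" and a :: "nat \<Rightarrow> complex" and p :: nat
  assumes a_nonzero: "\<And>n. n \<in> I \<Longrightarrow> a n \<noteq> 0"
    and conv_exponent: "conv_exponent_sum I a p"
begin

definition weight :: "nat \<Rightarrow> real" where
  "weight n = (if n \<in> I then 1 / norm (a n) ^ (p + 1) else 0)"

definition factor :: "nat \<Rightarrow> complex \<Rightarrow> complex" where
  "factor n z = canonical_factor I a p n z"

definition product :: "complex \<Rightarrow> complex" where
  "product z = (\<Prod>n. factor n z)"

lemma summable_weight: "summable weight"
  using conv_exponent unfolding conv_exponent_sum_def weight_def by simp

lemma eventually_norm_a_ge: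
  assumes R: "R > 0"
  shows "eventually (\<lambda>n. n \<in> I \<longrightarrow> norm (a n) \<ge> 2 * R) sequentially"
proof -
  have "weight \<longlonglongrightarrow> 0" using summable_weight by (rule summable_LIMSEQ_zero)
  moreover have "(1 / (2 * R) ^ (p + 1)) > 0" using R by simp
  ultimately have "eventually (\<lambda>n. weight n < 1 / (2 * R) ^ (p + 1)) sequentially"
    using order_tendstoD(2) by blast
  then show ?thesis
  proof eventually_elim
    case (elim n)
    show ?case
    proof
      assume nI: "n \<in> I"
      then have an: "norm (a n) > 0" using a_nonzero by auto
      from elim nI have "1 / norm (a n) ^ (p + 1) < 1 / (2 * R) ^ (p + 1)"
        by (simp add: weight_def)
      then have "(2 * R) ^ (p + 1) < norm (a n) ^ (p + 1)"
        using an R by (simp add: divide_simps)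
      then have "2 * R < norm (a n)"
        by (rule power_less_imp_less_base) simp
      then show "norm (a n) \<ge> 2 * R" by simp
    qed
  qed
qed

lemma eventually_factor_near_1:
  assumes R: "R > 0"
  shows "eventually (\<lambda>n. \<forall>z\<in>cball 0 R. norm (factor n z - 1) \<le> 3 * R ^ (p + 1) * weight n)
    sequentially"
  using eventually_norm_a_ge[OF R]
proof eventually_elim
  case (elim n)
  show ?case
  proof
    fix z :: complex assume z: "z \<in> cball 0 R"
    show "norm (factor n z - 1) \<le> 3 * R ^ (p + 1) * weight n"
    proof (cases "n \<in> I")
      case False
      then show ?thesis by (simp add: factor_def canonical_factor_def weight_def)
    next
      case True
      have an: "norm (a n) > 0" using a_nonzero True by auto
      have nz: "norm z \<le> R" using z by auto
      have "2 * norm z \<le> norm (a n)" using elim True nz by linarith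
      then have "norm z / norm (a n) \<le> 1 / 2" using an by (simp add: divide_simps)
      then have "norm (z / a n) \<le> 1 / 2" by (simp add: norm_divide)
      then have "norm (weierstrass_factor p (z / a n) - 1) \<le> 3 * norm (z / a n) ^ Suc p"
        by (rule weierstrass_factor_bound)
      also have "\<dots> = 3 * (norm z ^ (p + 1) * (1 / norm (a n) ^ (p + 1)))"
        by (simp add: norm_divide power_divide)
      also have "\<dots> \<le> 3 * (R ^ (p + 1) * (1 / norm (a n) ^ (p + 1)))"
        using nz by (intro mult_left_mono mult_right_mono power_mono) auto
      finally show ?thesis using True by (simp add: factor_def canonical_factor_def weight_def)
    qed
  qed
qed

lemma factor_holomorphic: "factor n holomorphic_on A"
  unfolding factor_def canonical_factor_def
  using a_nonzero by (cases "n \<in> I") (auto intro!: holomorphic_intros)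

lemma factor_continuous_on: "continuous_on A (factor n)"
  using factor_holomorphic holomorphic_on_imp_continuous_on by blast

lemma abs_convergent_prod_factors: "abs_convergent_prod (\<lambda>n. factor n z)"
  unfolding abs_convergent_prod_conv_summable
proof (rule summable_comparison_test_ev)
  have R: "norm z + 1 > 0" by (simp add: add_nonneg_pos)
  show "eventually (\<lambda>n. norm (norm (factor n z - 1)) \<le> 3 * (norm z + 1) ^ (p + 1) * weight n)
    sequentially"
    using eventually_factor_near_1[OF R] by eventually_elim auto
  show "summable (\<lambda>n. 3 * (norm z + 1) ^ (p + 1) * weight n)"
    by (intro summable_mult summable_weight)
qed

lemma has_prod_factors: "(\<lambda>n. factor n z) has_prod product z"
  using abs_convergent_prod_imp_convergent_prod[OF abs_convergent_prod_factors]
  unfolding product_def by (simp add: convergent_prod_has_prod)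

lemma uniform_limit_partial_products:
  assumes R: "R > 0"
  shows "uniform_limit (cball 0 R) (\<lambda>N z. \<Prod>n<N. factor n z) product sequentially"
proof -
  have "uniformly_convergent_on (cball 0 R) (\<lambda>N z. \<Prod>n<N. factor n z)"
  proof (rule uniformly_convergent_on_prod')
    show "uniformly_convergent_on (cball 0 R) (\<lambda>N z. \<Sum>n<N. norm (factor n z - 1))"
    proof (rule Weierstrass_m_test'_ev)
      show "\<forall>\<^sub>F n in sequentially. \<forall>z\<in>cball 0 R.
          norm (norm (factor n z - 1)) \<le> 3 * R ^ (p + 1) * weight n"
        using eventually_factor_near_1[OF R] by eventually_elim auto
      show "summable (\<lambda>n. 3 * R ^ (p + 1) * weight n)"
        by (intro summable_mult summable_weight)
    qed
  qed (auto intro: factor_continuous_on compact_cball)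
  then obtain g where g: "uniform_limit (cball 0 R) (\<lambda>N z. \<Prod>n<N. factor n z) g sequentially"
    by (auto simp: uniformly_convergent_on_def)
  also have "?this \<longleftrightarrow> uniform_limit (cball 0 R) (\<lambda>N z. \<Prod>n<N. factor n z) product sequentially"
  proof (intro uniform_limit_cong)
    fix z :: complex assume "z \<in> cball 0 R"
    have "(\<lambda>n. \<Prod>k<n. factor k z) \<longlonglongrightarrow> g z"
      by (rule tendsto_uniform_limitI[OF g]) fact
    moreover have "(\<lambda>n. \<Prod>k<Suc n. factor k z) \<longlonglongrightarrow> product z"
      using convergent_prod_LIMSEQ[OF abs_convergent_prod_imp_convergent_prod]
        abs_convergent_prod_factors[of z]
      unfolding lessThan_Suc_atMost product_def by blast
    then have "(\<lambda>n. \<Prod>k<n. factor k z) \<longlonglongrightarrow> product z"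
      by (rule LIMSEQ_imp_Suc)
    ultimately show "g z = product z"
      using tendsto_unique by force
  qed auto
  finally show ?thesis .
qed

lemma product_holomorphic: "product holomorphic_on A"
proof (rule holomorphic_on_subset)
  show "product holomorphic_on UNIV"
  proof (rule holomorphic_uniform_sequence[where f = "\<lambda>N z. \<Prod>n<N. factor n z"])
    fix z :: complex
    have "uniform_limit (cball 0 (norm z + 1)) (\<lambda>N z. \<Prod>n<N. factor n z) product sequentially"
      by (rule uniform_limit_partial_products) (auto intro: add_nonneg_pos)
    then have "uniform_limit (cball z 1) (\<lambda>N z. \<Prod>n<N. factor n z) product sequentially"
      by (rule uniform_limit_on_subset) (simp add: cball_subset_cball_iff)
    then show "\<exists>d>0. cball z d \<subseteq> UNIV \<and>
        uniform_limit (cball z d) (\<lambda>N z. \<Prod>n<N. factor n z) product sequentially"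
      by (intro exI[of _ 1]) auto
  qed (auto intro!: holomorphic_intros factor_holomorphic)
qed auto

lemma product_eq_0_iff: "product z = 0 \<longleftrightarrow> (\<exists>k\<in>I. z = a k)"
proof -
  have "product z = 0 \<longleftrightarrow> 0 \<in> range (\<lambda>n. factor n z)"
    using has_prod_eq_0_iff[OF has_prod_factors] .
  also have "\<dots> \<longleftrightarrow> (\<exists>k\<in>I. z = a k)"
  proof
    assume "0 \<in> range (\<lambda>n. factor n z)"
    then obtain k where "factor k z = 0" by auto
    then show "\<exists>k\<in>I. z = a k" using a_nonzero
      by (auto simp: factor_def canonical_factor_def split: if_splits)
  next
    assume "\<exists>k\<in>I. z = a k"
    then obtain k where "k \<in> I" "z = a k" by auto
    then have "factor k z = 0" using a_nonzero by (simp add: factor_def canonical_factor_def)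
    then show "0 \<in> range (\<lambda>n. factor n z)" by (metis rangeI)
  qed
  finally show ?thesis .
qed

lemma logderiv_product_sums:
  assumes "product z \<noteq> 0"
  shows "(\<lambda>k. deriv (factor k) z / factor k z) sums (deriv product z / product z)"
proof (rule logderiv_prodinf_complex_uniform_limit[where A = "ball 0 (norm z + 1)"])
  show "uniform_limit (ball 0 (norm z + 1)) (\<lambda>n x. \<Prod>k<n. factor k x) product sequentially"
    by (rule uniform_limit_on_subset[OF uniform_limit_partial_products[of "norm z + 1"]])
       (auto intro: add_nonneg_pos)
qed (use assms in \<open>auto intro: factor_holomorphic\<close>)

lemma logderiv_factor:
  assumes p1: "p \<le> 1" and nz: "k \<in> I \<Longrightarrow> z \<noteq> a k"
  shows "deriv (factor k) z / factor k z = logderiv_term I a p k z"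
proof (cases "k \<in> I")
  case False
  then have "factor k = (\<lambda>_. 1)" by (auto simp: factor_def canonical_factor_def fun_eq_iff)
  then show ?thesis using False by (simp add: logderiv_term_def)
next
  case True
  have ak: "a k \<noteq> 0" using a_nonzero True by auto
  have zk: "z - a k \<noteq> 0" "a k - z \<noteq> 0" using nz True by auto
  show ?thesis
  proof (cases "p = 0")
    case True
    have wf: "\<And>u. weierstrass_factor p u = 1 - u"
      using True by (simp add: weierstrass_factor_def)
    have ce: "factor k = (\<lambda>z. 1 - z / a k)"
      using \<open>k \<in> I\<close> by (simp add: factor_def canonical_factor_def wf fun_eq_iff)
    have "((\<lambda>z. 1 - z / a k) has_field_derivative (- 1 / a k)) (at z)"
      using ak by (auto intro!: derivative_eq_intros)
    then have "deriv (factor k) z = - 1 / a k" unfolding ce by (rule DERIV_imp_deriv)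
    moreover have "p \<noteq> 1" using True by simp
    ultimately show ?thesis using \<open>k \<in> I\<close> ak zk by (simp add: logderiv_term_def ce field_simps)
  next
    case False
    then have p: "p = 1" using p1 by auto
    have wf: "\<And>u. weierstrass_factor p u = (1 - u) * exp u"
      using p by (simp add: weierstrass_factor_def)
    have ce: "factor k = (\<lambda>z. (1 - z / a k) * exp (z / a k))"
      using \<open>k \<in> I\<close> by (simp add: factor_def canonical_factor_def wf fun_eq_iff)
    have "((\<lambda>z. (1 - z / a k) * exp (z / a k)) has_field_derivative
            (- 1 / a k) * exp (z / a k) + (1 - z / a k) * (exp (z / a k) * (1 / a k))) (at z)"
      using ak by (auto intro!: derivative_eq_intros)
    then have dk: "deriv (factor k) z =
        (- 1 / a k) * exp (z / a k) + (1 - z / a k) * (exp (z / a k) * (1 / a k))"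
      unfolding ce by (rule DERIV_imp_deriv)
    have term_eq: "logderiv_term I a p k z = 1 / (z - a k) + 1 / a k"
      unfolding logderiv_term_def using \<open>k \<in> I\<close> p by simp
    show ?thesis unfolding term_eq dk using ak zk by (simp add: ce field_simps)
  qed
qed

lemma logderiv_sums:
  fixes m :: nat and P :: "complex poly" and f :: "complex \<Rightarrow> complex"
  assumes p1: "p \<le> 1"
    and fdef: "\<And>z. f z = z ^ m * exp (poly P z) * product z"
    and fz: "f z \<noteq> 0"
  shows "(\<lambda>k. logderiv_term I a p k z) sums (deriv f z / f z - of_nat m / z - poly (pderiv P) z)"
proof -
  have fe: "f = (\<lambda>z. z ^ m * exp (poly P z) * product z)" using fdef by auto
  have product_z: "product z \<noteq> 0" and zm: "z ^ m \<noteq> 0" using fz fdef by auto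
  have d_product: "(product has_field_derivative deriv product z) (at z)"
    using product_holomorphic[of UNIV] by (auto intro!: holomorphic_derivI)
  have "(f has_field_derivative
          (of_nat m * z ^ (m - 1)) * exp (poly P z) * product z
          + z ^ m * (exp (poly P z) * poly (pderiv P) z) * product z
          + z ^ m * exp (poly P z) * deriv product z) (at z)"
    unfolding fe by (auto intro!: derivative_eq_intros d_product poly_DERIV simp: algebra_simps)
  then have df: "deriv f z = (of_nat m * z ^ (m - 1)) * exp (poly P z) * product z
          + z ^ m * (exp (poly P z) * poly (pderiv P) z) * product z
          + z ^ m * exp (poly P z) * deriv product z"
    by (rule DERIV_imp_deriv)
  have mz: "of_nat m * z ^ (m - 1) / z ^ m = of_nat m / z"
  proof (cases m)
    case (Suc j)
    then have "z \<noteq> 0" using zm by auto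
    then show ?thesis using Suc by (simp add: field_simps)
  qed simp
  have "deriv f z / f z =
      of_nat m * z ^ (m - 1) / z ^ m + poly (pderiv P) z + deriv product z / product z"
    unfolding df fdef using product_z zm by (simp add: field_simps)
  then have eq: "deriv product z / product z = deriv f z / f z - of_nat m / z - poly (pderiv P) z"
    using mz by simp
  have nz: "k \<in> I \<Longrightarrow> z \<noteq> a k" for k using product_z product_eq_0_iff by auto
  show ?thesis
    using logderiv_product_sums[OF product_z] logderiv_factor[OF p1 nz] eq by simp
qed

end

lemma genus_le_1_logderiv_expansion:
  assumes genus: "has_genus f g" "g \<le> 1"
  obtains m I a p C where "\<And>z. f z = 0 \<longleftrightarrow> (0 < m \<and> z = 0) \<or> (\<exists>k\<in>I. z = a k)"
    "\<And>z. f z \<noteq> 0 \<Longrightarrow> (\<lambda>k. logderiv_term I a p k z) sums (deriv f z / f z - of_nat m / z - C)"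
proof -
  obtain m I a p P where anz: "\<forall>n\<in>I. a n \<noteq> 0" and ex: "\<exists>q. conv_exponent_sum I a q"
    and p: "p = (LEAST q. conv_exponent_sum I a q)"
    and f: "\<And>z. f z = z ^ m * exp (poly P z) * (\<Prod>n. canonical_factor I a p n z)"
    and g: "g = max p (degree P)"
    using genus(1) unfolding has_genus_def by blast
  interpret canonical_product I a p
    using anz LeastI_ex[OF ex] p by unfold_locales auto
  have f_product: "\<And>z. f z = z ^ m * exp (poly P z) * product z"
    using f by (simp add: product_def factor_def)
  define C where "C = coeff (pderiv P) 0"
  have "degree (pderiv P) = 0" using g genus(2) by (simp add: degree_pderiv)
  then have "pderiv P = [:C:]" unfolding C_def using degree_0_id by metis
  then have "(\<lambda>k. logderiv_term I a p k z) sums (deriv f z / f z - of_nat m / z - C)"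
    if "f z \<noteq> 0" for z
    using that logderiv_sums[OF _ f_product] g genus(2) by simp
  moreover have "f z = 0 \<longleftrightarrow> (0 < m \<and> z = 0) \<or> (\<exists>k\<in>I. z = a k)" for z
    using f_product[of z] product_eq_0_iff[of z] by auto
  ultimately show thesis using that by blast
qed

lemma islimpt_Reals:
  fixes x :: complex
  assumes "x \<in> \<real>"
  shows "x islimpt \<real>"
  unfolding islimpt_approachable
proof (intro allI impI)
  fix e :: real assume "e > 0"
  then show "\<exists>x'\<in>\<real>. x' \<noteq> x \<and> dist x' x < e"
    using assms by (intro bexI[of _ "x + of_real (e / 2)"]) (auto simp: dist_norm)
qed

lemma deriv_in_Reals:
  assumes hol: "f holomorphic_on UNIV" and real: "\<forall>x\<in>\<real>. f x \<in> \<real>" and x: "x \<in> \<real>"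
  shows "deriv f x \<in> \<real>"
proof -
  have "(f has_field_derivative deriv f x) (at x within \<real>)"
    using hol by (auto intro: holomorphic_derivI[of f UNIV] has_field_derivative_at_within)
  then have lim: "((\<lambda>y. (f y - f x) / (y - x)) \<longlongrightarrow> deriv f x) (at x within \<real>)"
    by (simp add: has_field_derivative_iff)
  have "at x within \<real> \<noteq> bot"
    using islimpt_Reals[OF x] trivial_limit_within by blast
  moreover have "eventually (\<lambda>y. (f y - f x) / (y - x) \<in> \<real>) (at x within \<real>)"
    unfolding eventually_at_filter using real x
    by (auto intro!: always_eventually Reals_diff Reals_divide)
  ultimately show ?thesis using Lim_in_closed_set[OF closed_complex_Reals _ _ lim] by blast
qed

lemma ex_Reals_nonzero:
  assumes hol: "f holomorphic_on UNIV" and nc: "\<not> (\<exists>c. \<forall>z. f z = c)"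
  obtains x where "x \<in> \<real>" "f x \<noteq> 0"
proof -
  have "\<exists>x\<in>\<real>. f x \<noteq> 0"
  proof (rule ccontr)
    assume "\<not> (\<exists>x\<in>\<real>. f x \<noteq> 0)"
    then have zero: "\<And>x. x \<in> \<real> \<Longrightarrow> f x = 0" by auto
    have "f w = 0" for w
      by (rule analytic_continuation[OF hol open_UNIV connected_UNIV subset_UNIV UNIV_I
            islimpt_Reals[OF Reals_0]]) (use zero in auto)
    with nc show False by auto
  qed
  then show thesis using that by blast
qed

lemma real_critical_point_between:
  assumes hol: "f holomorphic_on UNIV" and real: "\<forall>x\<in>\<real>. f x \<in> \<real>"
    and st: "s \<in> \<real>" "t \<in> \<real>" "Re s < Re t" "f s = f t"
  obtains \<xi> where "Re s < \<xi>" "\<xi> < Re t" "deriv f (of_real \<xi>) = 0"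
proof -
  define g where "g x = Re (f (of_real x))" for x
  have dg: "(g has_real_derivative Re (deriv f (of_real x))) (at x)" for x
  proof -
    have "(f has_field_derivative deriv f (of_real x)) (at (of_real x))"
      using hol by (auto intro: holomorphic_derivI[of f UNIV])
    then have "((\<lambda>x. f (of_real x)) has_vector_derivative deriv f (of_real x)) (at x)"
      by (rule has_vector_derivative_real_field)
    then show ?thesis unfolding g_def by (rule has_field_derivative_Re)
  qed
  have cf: "continuous_on UNIV f" using hol holomorphic_on_imp_continuous_on by blast
  have cont: "continuous_on {Re s..Re t} g"
    unfolding g_def by (intro continuous_intros continuous_on_compose2[OF cf]) auto
  have ends: "g (Re s) = g (Re t)" using st by (simp add: g_def of_real_Re)
  obtain \<xi> where \<xi>: "Re s < \<xi>" "\<xi> < Re t" "(g has_real_derivative 0) (at \<xi>)"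
    using Rolle[OF st(3) ends cont] dg real_differentiable_def by blast
  have "Re (deriv f (of_real \<xi>)) = 0" using DERIV_unique[OF \<xi>(3) dg] by simp
  moreover have "Im (deriv f (of_real \<xi>)) = 0"
    using deriv_in_Reals[OF hol real, of "of_real \<xi>"] by (simp add: complex_is_Real_iff)
  ultimately show thesis using that \<xi> by (simp add: complex_eq_iff)
qed

lemma recip_diff_pos_outside:
  fixes \<alpha> \<beta> \<gamma> :: real
  assumes "\<alpha> < \<beta>" "\<gamma> < \<alpha> \<or> \<beta> < \<gamma>"
  shows "1 / (\<alpha> - \<gamma>) - 1 / (\<beta> - \<gamma>) > 0"
  using assms(2)
proof
  assume "\<gamma> < \<alpha>"
  then have "1 / (\<beta> - \<gamma>) < 1 / (\<alpha> - \<gamma>)" using assms(1) by (auto intro!: frac_less2)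
  then show ?thesis by simp
next
  assume "\<beta> < \<gamma>"
  then have "1 / (\<beta> - \<gamma>) < 1 / (\<alpha> - \<gamma>)" using assms(1) by (simp add: divide_simps)
  then show ?thesis by simp
qed

lemma Im_recip_diff_Reals:
  assumes "a \<in> \<real>" "x \<in> \<real>"
  shows "Im (1 / (z - a) - 1 / (x - a)) = - Im z / ((Re z - Re a)\<^sup>2 + (Im z)\<^sup>2)"
proof -
  have "Im a = 0" "Im x = 0" using assms by (simp_all add: complex_is_Real_iff)
  then show ?thesis by (simp add: Im_divide)
qed

lemma Re_recip_diff_Reals:
  assumes "a \<in> \<real>" "u \<in> \<real>" "v \<in> \<real>"
  shows "Re (1 / (u - a) - 1 / (v - a)) = 1 / (Re u - Re a) - 1 / (Re v - Re a)"
proof -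
  have "u - a = of_real (Re u - Re a)" "v - a = of_real (Re v - Re a)"
    using assms by (simp_all add: complex_eq_iff complex_is_Real_iff)
  then have "1 / (u - a) - 1 / (v - a) = 1 / of_real (Re u - Re a) - 1 / of_real (Re v - Re a)"
    by (simp only:)
  then show ?thesis by (simp add: Re_divide_of_real)
qed

lemma sums_nonneg_nonpos_imp_zero:
  fixes g :: "nat \<Rightarrow> real"
  assumes "g sums s" "\<And>n. 0 \<le> g n" "s \<le> 0"
  shows "s = 0" "g = (\<lambda>_. 0)"
proof -
  have "0 \<le> s" by (rule sums_le[OF _ sums_zero assms(1)]) (use assms(2) in auto)
  with assms(3) show "s = 0" by simp
  with assms show "g = (\<lambda>_. 0)" using suminf_eq_zero_iff by (auto simp: sums_iff)
qed

locale real_logderiv_expansion =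
  fixes f :: "complex \<Rightarrow> complex" and I :: "nat set" and a :: "nat \<Rightarrow> complex"
    and p m :: nat and C :: complex
  assumes entire: "f holomorphic_on UNIV"
    and nonconst: "\<not> (\<exists>c. \<forall>z. f z = c)"
    and real_on_real: "\<forall>x\<in>\<real>. f x \<in> \<real>"
    and real_zeros: "\<forall>z. f z = 0 \<longrightarrow> z \<in> \<real>"
    and zero_iff: "\<And>z. f z = 0 \<longleftrightarrow> (0 < m \<and> z = 0) \<or> (\<exists>k\<in>I. z = a k)"
    and logderiv: "\<And>z. f z \<noteq> 0 \<Longrightarrow>
      (\<lambda>k. logderiv_term I a p k z) sums (deriv f z / f z - of_nat m / z - C)"
begin

lemma zero_in_Reals: "k \<in> I \<Longrightarrow> a k \<in> \<real>"
  using real_zeros zero_iff by blast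

lemma logderiv_diff_sums:
  assumes "f z \<noteq> 0" "f x \<noteq> 0"
  shows "(\<lambda>k. if k \<in> I then 1 / (z - a k) - 1 / (x - a k) else 0) sums
      ((deriv f z / f z - of_nat m / z) - (deriv f x / f x - of_nat m / x))"
proof -
  have "(\<lambda>k. logderiv_term I a p k z - logderiv_term I a p k x) sums
      ((deriv f z / f z - of_nat m / z - C) - (deriv f x / f x - of_nat m / x - C))"
    using sums_diff[OF logderiv[OF assms(1)] logderiv[OF assms(2)]] .
  moreover have "(\<lambda>k. logderiv_term I a p k z - logderiv_term I a p k x) =
      (\<lambda>k. if k \<in> I then 1 / (z - a k) - 1 / (x - a k) else 0)"
    by (auto simp: logderiv_term_def fun_eq_iff)
  moreover have "(deriv f z / f z - of_nat m / z - C) - (deriv f x / f x - of_nat m / x - C) =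
      (deriv f z / f z - of_nat m / z) - (deriv f x / f x - of_nat m / x)"
    by simp
  ultimately show ?thesis by (simp only:)
qed

lemma deriv_ne_0_if_zero_free:
  assumes "m = 0" "I = {}"
  shows "deriv f z \<noteq> 0"
proof
  assume dz: "deriv f z = 0"
  have fnz: "f y \<noteq> 0" for y using zero_iff assms by auto
  have df: "deriv f y = C * f y" for y
  proof -
    have "(\<lambda>k. 0) sums (deriv f y / f y - C)"
      using logderiv[OF fnz[of y]] assms by (simp add: logderiv_term_def)
    then have "deriv f y / f y - C = 0" using sums_unique2 sums_zero by blast
    then show ?thesis using fnz[of y] by (simp add: field_simps)
  qed
  then have "C = 0" using dz fnz[of z] by simp
  then have "(f has_field_derivative 0) (at y within UNIV)" for y
    using df[of y] entire by (metis holomorphic_derivI open_UNIV UNIV_I mult_zero_left)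
  then obtain c where "\<forall>y\<in>UNIV. f y = c"
    using has_field_derivative_zero_constant[of UNIV f] by auto
  with nonconst show False by auto
qed

lemma deriv_eq_0_imp_Reals:
  assumes dz: "deriv f z = 0"
  shows "z \<in> \<real>"
proof (rule ccontr)
  assume "z \<notin> \<real>"
  then have imz: "Im z \<noteq> 0" and fz: "f z \<noteq> 0" using real_zeros by (auto simp: complex_is_Real_iff)
  obtain x where x: "x \<in> \<real>" "f x \<noteq> 0" using ex_Reals_nonzero[OF entire nonconst] by blast
  have "deriv f x / f x - of_nat m / x \<in> \<real>"
    using deriv_in_Reals[OF entire real_on_real x(1)] real_on_real x(1)
    by (auto intro: Reals_divide Reals_diff)
  then have Im_x: "Im (deriv f x / f x - of_nat m / x) = 0" by (simp add: complex_is_Real_iff)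
  define q where "q = (Re z)\<^sup>2 + (Im z)\<^sup>2"
  have q: "q > 0" using imz by (simp add: q_def add_nonneg_pos)
  define w where "w k = (if k \<in> I then 1 / ((Re z - Re (a k))\<^sup>2 + (Im z)\<^sup>2) else 0)" for k
  have "(\<lambda>k. Im (if k \<in> I then 1 / (z - a k) - 1 / (x - a k) else 0)) sums
      Im ((deriv f z / f z - of_nat m / z) - (deriv f x / f x - of_nat m / x))"
    using sums_Im[OF logderiv_diff_sums[OF fz x(2)]] .
  moreover have "Im (if k \<in> I then 1 / (z - a k) - 1 / (x - a k) else 0) = - Im z * w k" for k
    using Im_recip_diff_Reals[OF zero_in_Reals x(1)] by (simp add: w_def)
  moreover have "Im ((deriv f z / f z - of_nat m / z) - (deriv f x / f x - of_nat m / x)) =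
      - Im (of_nat m / z)"
    using dz Im_x by simp
  moreover have "- Im (of_nat m / z) = - Im z * (- of_nat m / q)"
    by (simp add: Im_divide q_def)
  ultimately have "(\<lambda>k. - Im z * w k) sums (- Im z * (- of_nat m / q))" by simp
  then have "w sums (- of_nat m / q)"
    using sums_mult_iff[of "- Im z" w "- of_nat m / q"] imz by (metis neg_equal_0_iff_equal)
  moreover have "0 \<le> w k" for k by (simp add: w_def)
  moreover have "- of_nat m / q \<le> 0" using q by simp
  ultimately have "- of_nat m / q = 0" "w = (\<lambda>_. 0)" by (rule sums_nonneg_nonpos_imp_zero)+
  then have "m = 0" "I = {}"
    using q imz by (auto simp: w_def fun_eq_iff add_nonneg_pos split: if_splits)
  then show False using deriv_ne_0_if_zero_free dz by blast
qed

lemma zero_between_real_critical_points: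
  assumes u: "u \<in> \<real>" and v: "v \<in> \<real>" and uv: "Re u < Re v"
    and du: "deriv f u = 0" and dv: "deriv f v = 0"
  shows "\<exists>t. f t = 0 \<and> Re u \<le> Re t \<and> Re t \<le> Re v"
proof (rule ccontr)
  assume no_zero: "\<not> ?thesis"
  then have fu: "f u \<noteq> 0" and fv: "f v \<noteq> 0" using uv by (meson less_imp_le order_refl)+
  define r where "r k = (if k \<in> I then 1 / (Re u - Re (a k)) - 1 / (Re v - Re (a k)) else 0)" for k
  define s where "s = - (of_nat m * (1 / Re u - 1 / Re v))"
  have "(\<lambda>k. Re (if k \<in> I then 1 / (u - a k) - 1 / (v - a k) else 0)) sums
      Re ((deriv f u / f u - of_nat m / u) - (deriv f v / f v - of_nat m / v))"
    using sums_Re[OF logderiv_diff_sums[OF fu fv]] .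
  moreover have "Re (if k \<in> I then 1 / (u - a k) - 1 / (v - a k) else 0) = r k" for k
    using Re_recip_diff_Reals[OF zero_in_Reals u v] by (simp add: r_def)
  moreover have "Re (of_nat m / u) = of_nat m / Re u" "Re (of_nat m / v) = of_nat m / Re v"
    using u v by (metis Re_complex_of_real of_real_Re of_real_divide of_real_of_nat_eq)+
  then have "Re ((deriv f u / f u - of_nat m / u) - (deriv f v / f v - of_nat m / v)) = s"
    using du dv by (simp add: s_def algebra_simps)
  ultimately have r_sums: "r sums s" by simp
  have r_pos: "r k > 0" if "k \<in> I" for k
  proof -
    have "f (a k) = 0" using zero_iff that by auto
    then have "Re (a k) < Re u \<or> Re v < Re (a k)" using no_zero by (meson not_le)
    then show ?thesis using recip_diff_pos_outside[OF uv] that by (simp add: r_def)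
  qed
  then have r_nonneg: "0 \<le> r k" for k by (cases "k \<in> I") (auto simp: r_def intro: less_imp_le)
  have s_neg: "s < 0" if "m > 0"
  proof -
    have "f 0 = 0" using zero_iff that by auto
    then have "0 < Re u \<or> Re v < 0" using no_zero by (metis not_le zero_complex.sel(1))
    then have "1 / (Re u - 0) - 1 / (Re v - 0) > 0" using recip_diff_pos_outside[OF uv] by blast
    then show ?thesis using that by (simp add: s_def)
  qed
  then have "s \<le> 0" by (cases "m > 0") (auto simp: s_def)
  then have "s = 0" "r = (\<lambda>_. 0)" using sums_nonneg_nonpos_imp_zero[OF r_sums r_nonneg] by blast+
  with s_neg r_pos have "m = 0" "I = {}" by (auto simp: fun_eq_iff)
  then show False using deriv_ne_0_if_zero_free du by blast
qed

end

theorem theorem5: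
  fixes f :: "complex \<Rightarrow> complex"
  assumes entire: "f holomorphic_on UNIV"
    and nonconst: "\<not> (\<exists>c. \<forall>z. f z = c)"
    and real_zeros: "\<forall>z. f z = 0 \<longrightarrow> z \<in> \<real>"
    and genus: "has_genus f 0 \<or> has_genus f 1"
    and real_on_real: "\<forall>x\<in>\<real>. f x \<in> \<real>"
  shows "Fix_Aut f \<subseteq> \<real>
    \<and> (\<forall>u\<in>Fix_Aut f. \<forall>v\<in>Fix_Aut f. Re u < Re v \<longrightarrow>
          (\<exists>t. f t = 0 \<and> Re u \<le> Re t \<and> Re t \<le> Re v))
    \<and> (\<forall>s t. f s = 0 \<and> f t = 0 \<and> Re s < Re t \<longrightarrow>
          (\<exists>w\<in>Fix_Aut f. Re s < Re w \<and> Re w < Re t))"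
proof -
  have Fix: "Fix_Aut f = {w. deriv f w = 0}"
    using Fix_Aut_eq_critical_points[OF entire nonconst] .
  obtain g where "has_genus f g" "g \<le> 1" using genus by auto
  then obtain m I a p C where "\<And>z. f z = 0 \<longleftrightarrow> (0 < m \<and> z = 0) \<or> (\<exists>k\<in>I. z = a k)"
    and "\<And>z. f z \<noteq> 0 \<Longrightarrow> (\<lambda>k. logderiv_term I a p k z) sums (deriv f z / f z - of_nat m / z - C)"
    by (rule genus_le_1_logderiv_expansion) blast
  then interpret real_logderiv_expansion f I a p m C
    using entire nonconst real_on_real real_zeros by unfold_locales
  have Fix_real: "Fix_Aut f \<subseteq> \<real>" using Fix deriv_eq_0_imp_Reals by blast
  moreover have "\<exists>t. f t = 0 \<and> Re u \<le> Re t \<and> Re t \<le> Re v"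
    if "u \<in> Fix_Aut f" "v \<in> Fix_Aut f" "Re u < Re v" for u v
    using that Fix Fix_real zero_between_real_critical_points by blast
  moreover have "\<exists>w\<in>Fix_Aut f. Re s < Re w \<and> Re w < Re t"
    if zeros: "f s = 0" "f t = 0" and less: "Re s < Re t" for s t
  proof -
    have st: "s \<in> \<real>" "t \<in> \<real>" "f s = f t" using zeros real_zeros by auto
    obtain \<xi> where "Re s < \<xi>" "\<xi> < Re t" "deriv f (of_real \<xi>) = 0"
      by (rule real_critical_point_between[OF entire real_on_real st(1,2) less st(3)]) blast
    then show ?thesis using Fix by (intro bexI[of _ "of_real \<xi>"]) auto
  qed
  ultimately show ?thesis by blast
qed

end
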